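(* Let $\mathcal H$ be a complex Hilbert space of finite dimension $d$, and $\mathcal P_N$ the convex set of $N$-outcome POVMs on $\mathcal H$. For $\mathbf P=(P_1,\dots,P_N)\in\mathcal P_N$, let $\{|v^{(e)}_n\rangle\}_{n=1}^{\mathrm{rank}(P_e)}$ be an orthonormal set of eigenvectors of $P_e$ with nonzero eigenvalues, and define $$r(\mathbf P)=\sum_{e=1}^N\mathrm{rank}(P_e)^2,\qquad l(\mathbf P)=\dim\mathrm{Span}\{|v^{(e)}_m\rangle\langle v^{(e)}_n| : 1\le e\le N,\ 1\le m,n\le \mathrm{rank}(P_e)\},\qquad b(\mathbf P)=r(\mathbf P)-l(\mathbf P).$$ Then $\mathbf P\in\partial\mathcal P_N$ if and only if $b(\mathbf P)<d^2(N-1)$. Moreover, $b(\mathbf P)$ is the dimension of the face of $\mathcal P_N$ in which $\mathbf P$ lies, i.e. the real dimension of the space of $N$-tuples $\mathbf D$ of Hermitian operators such that $\mathbf P\pm\epsilon\mathbf D\in\mathcal P_N$ for some $\epsilon>0$.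
   Context: $\mathcal P_N$ is the set of $N$-tuples of positive semidefinite operators on $\mathcal H$ (zero allowed) summing to $I$; it is a convex subset of a real affine space of dimension $d^2(N-1)$. The span is the complex linear span in the space of operators on $\mathcal H$. For a convex set $\mathcal C$, a point $p\in\mathcal C$ belongs to $\partial\mathcal C$ iff there exists $q\in\mathcal C$ with $p+\epsilon(q-p)\in\mathcal C$ and $p-\epsilon(q-p)\notin\mathcal C$ for all $\epsilon\in(0,1]$. *)

theory Defs
  imports "HOL-Analysis.Analysis"
begin

text \<open>Operators on H = complex^'n (d = CARD('n)) are matrices complex^'n^'n.
  N-tuples of operators are indexed by a finite type 'e (N = CARD('e)).\<close>

type_synonym 'n op = "complex^'n::finite^'n"

definition cinner :: "complex^'n::finite \<Rightarrow> complex^'n \<Rightarrow> complex" where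
  "cinner x y = (\<Sum>i\<in>UNIV. cnj (x$i) * y$i)"

definition cadj :: "('n::finite) op \<Rightarrow> ('n::finite) op" where
  "cadj A = (\<chi> i j. cnj (A$j$i))"

definition hermitian_op :: "('n::finite) op \<Rightarrow> bool" where
  "hermitian_op A \<longleftrightarrow> cadj A = A"

definition psd_op :: "('n::finite) op \<Rightarrow> bool" where
  "psd_op A \<longleftrightarrow> hermitian_op A \<and> (\<forall>x. 0 \<le> Re (cinner x (A *v x)))"

definition outer :: "complex^('n::finite) \<Rightarrow> complex^'n \<Rightarrow> 'n op" where
  "outer v w = (\<chi> i j. v$i * cnj (w$j))"

definition POVMs :: "((('n::finite) op)^('e::finite)) set" where
  "POVMs = {P. (\<forall>e. psd_op (P$e)) \<and> (\<Sum>e\<in>UNIV. P$e) = mat 1}"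

definition conv_boundary :: "'a::real_vector set \<Rightarrow> 'a set" where
  "conv_boundary C = {p\<in>C. \<exists>q\<in>C. \<forall>\<epsilon>::real. 0 < \<epsilon> \<and> \<epsilon> \<le> 1 \<longrightarrow>
       p + \<epsilon> *\<^sub>R (q - p) \<in> C \<and> p - \<epsilon> *\<^sub>R (q - p) \<notin> C}"

definition cscale :: "complex \<Rightarrow> ('n::finite) op \<Rightarrow> ('n::finite) op" where
  "cscale c A = (\<chi> i j. c * A$i$j)"

interpretation opc: vector_space "cscale :: complex \<Rightarrow> ('n::finite) op \<Rightarrow> ('n::finite) op"
  by unfold_locales (auto simp: cscale_def vec_eq_iff algebra_simps)

definition face_dirs :: "(('n::finite) op)^('e::finite) \<Rightarrow> ((('n::finite) op)^('e::finite)) set" where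
  "face_dirs P = {D. (\<forall>e. hermitian_op (D$e)) \<and>
       (\<exists>\<epsilon>::real. 0 < \<epsilon> \<and> P + \<epsilon> *\<^sub>R D \<in> POVMs \<and> P - \<epsilon> *\<^sub>R D \<in> POVMs)}"

definition eig_basis :: "(('n::finite) op)^('e::finite) \<Rightarrow> ('e \<Rightarrow> nat \<Rightarrow> complex^('n::finite)) \<Rightarrow> bool" where
  "eig_basis P v \<longleftrightarrow> (\<forall>e. (\<forall>m<rank (P$e). \<forall>n<rank (P$e).
        cinner (v e m) (v e n) = (if m = n then 1 else 0)) \<and>
      (\<forall>n<rank (P$e). \<exists>c. c \<noteq> 0 \<and> (P$e) *v (v e n) = c *s (v e n)))"

definition r_num :: "(('n::finite) op)^('e::finite) \<Rightarrow> nat" where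
  "r_num P = (\<Sum>e\<in>UNIV. rank (P$e) ^ 2)"

definition l_num :: "(('n::finite) op)^('e::finite) \<Rightarrow> ('e \<Rightarrow> nat \<Rightarrow> complex^('n::finite)) \<Rightarrow> nat" where
  "l_num P v = opc.dim {outer (v e m) (v e n) | e m n. m < rank (P$e) \<and> n < rank (P$e)}"

definition b_num :: "(('n::finite) op)^('e::finite) \<Rightarrow> ('e \<Rightarrow> nat \<Rightarrow> complex^('n::finite)) \<Rightarrow> int" where
  "b_num P v = int (r_num P) - int (l_num P v)"

end

(*
  A direction D lies in the face of P exactly when every D_e is Hermitian, lies in the span of
  the |v_m><v_n| built from the eigenvectors of P_e (i.e. is supported on the support of P_e),
  and the D_e sum to zero: such perturbations keep P_e positive because P_e is bounded below on
  its support, and conversely P_e +- eps D_e >= 0 forces D_e to vanish on the kernel of P_e.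
  The Hermitian part of a complex subspace closed under adjoints has real dimension equal to its
  complex dimension, so the tuples with D_e in these spans form a real space of dimension r(P);
  summation maps it onto the Hermitian part of the span of all |v_m><v_n|, of dimension l(P), and
  rank-nullity gives b(P) = dim of the face. The face always lies in the space of Hermitian tuples
  with zero sum, of dimension d^2(N-1). If the face is all of it, every Q - P can be reversed, so
  P is not a boundary point; if P is not a boundary point, going back from the uniform POVM
  shows P_e >= c I for some c > 0, and then every such tuple is a face direction.
*)

theory Submission
  imports Defs
begin

section \<open>Inner product, adjoint and Hermitian operators\<close>

lemma cinner_add_right: "cinner x (y + z) = cinner x y + cinner x z"
  by (simp add: cinner_def algebra_simps sum.distrib)

lemma cinner_add_left: "cinner (x + y) z = cinner x z + cinner y z"
  by (simp add: cinner_def algebra_simps sum.distrib)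

lemma cinner_diff_right: "cinner x (y - z) = cinner x y - cinner x z"
  by (simp add: cinner_def algebra_simps sum_subtractf)

lemma cinner_scale_right: "cinner x (c *s y) = c * cinner x y"
  by (simp add: cinner_def sum_distrib_left algebra_simps)

lemma cinner_scale_left: "cinner (c *s x) y = cnj c * cinner x y"
  by (simp add: cinner_def sum_distrib_left algebra_simps)

lemma scaleR_eq_of_real_scale: "r *\<^sub>R (y::complex^'n::finite) = complex_of_real r *s y"
  by (simp add: vec_eq_iff) (simp add: scaleR_conv_of_real)

lemma cinner_scaleR_right: "cinner x (r *\<^sub>R y) = of_real r * cinner x y"
  by (simp add: scaleR_eq_of_real_scale cinner_scale_right)

lemma cinner_zero_left [simp]: "cinner 0 y = 0"
  and cinner_zero_right [simp]: "cinner x 0 = 0"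
  by (simp_all add: cinner_def)

lemma cinner_sum_right: "cinner x (sum f S) = (\<Sum>i\<in>S. cinner x (f i))"
  unfolding cinner_def sum_component sum_distrib_left by (rule sum.swap)

lemma cinner_sum_left: "cinner (sum f S) y = (\<Sum>i\<in>S. cinner (f i) y)"
  unfolding cinner_def sum_component cnj_sum sum_distrib_right by (rule sum.swap)

lemma cnj_cinner: "cnj (cinner x y) = cinner y x"
  by (simp add: cinner_def mult.commute)

lemma cinner_self: "cinner x x = of_real (\<Sum>i\<in>UNIV. (cmod (x$i))\<^sup>2)"
  unfolding cinner_def of_real_sum
  by (rule sum.cong[OF refl]) (metis complex_norm_square mult.commute)

lemma Re_cinner_self_nonneg: "0 \<le> Re (cinner x x)"
  by (simp add: cinner_self sum_nonneg)

lemma cinner_self_eq_0_iff: "cinner x x = 0 \<longleftrightarrow> x = 0"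
proof
  assume "cinner x x = 0"
  then have "(\<Sum>i\<in>UNIV. (cmod (x$i))\<^sup>2) = 0"
    unfolding cinner_self of_real_eq_0_iff .
  then show "x = 0"
    by (simp add: sum_nonneg_eq_0_iff vec_eq_iff)
qed simp

lemma cinner_adjoint: "cinner x (A *v y) = cinner (cadj A *v x) y"
proof -
  have "cinner x (A *v y) = (\<Sum>i\<in>UNIV. \<Sum>j\<in>UNIV. cnj (x$i) * A$i$j * y$j)"
    by (simp add: cinner_def matrix_vector_mult_def sum_distrib_left mult.assoc)
  also have "\<dots> = (\<Sum>j\<in>UNIV. \<Sum>i\<in>UNIV. cnj (x$i) * A$i$j * y$j)"
    by (rule sum.swap)
  also have "\<dots> = cinner (cadj A *v x) y"
    by (simp add: cinner_def cadj_def matrix_vector_mult_def sum_distrib_left cnj_sum mult_ac)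
  finally show ?thesis .
qed

lemma hermitian_cinner: "hermitian_op A \<Longrightarrow> cinner x (A *v y) = cinner (A *v x) y"
  by (metis cinner_adjoint hermitian_op_def)

lemma hermitian_cinner_real:
  "hermitian_op A \<Longrightarrow> cinner x (A *v x) = of_real (Re (cinner x (A *v x)))"
  by (metis cnj_cinner hermitian_cinner Reals_cnj_iff complex_is_Real_iff of_real_Re)

lemma cscale_mv: "cscale c A *v x = c *s (A *v x)"
  by (simp add: cscale_def matrix_vector_mult_def vec_eq_iff sum_distrib_left algebra_simps)

lemma scaleR_eq_cscale: "r *\<^sub>R A = cscale (of_real r) A"
  by (simp add: cscale_def vec_eq_iff) (simp add: scaleR_conv_of_real)

lemma scaleR_mv: "(r *\<^sub>R (A::'n::finite op)) *v x = r *\<^sub>R (A *v x)"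
  by (simp add: scaleR_eq_cscale cscale_mv scaleR_eq_of_real_scale)

lemma sum_mv: "(\<Sum>i\<in>S. f i) *v x = (\<Sum>i\<in>S. f i *v x)"
  by (induction S rule: infinite_finite_induct) (simp_all add: matrix_vector_mult_add_rdistrib)

lemma outer_mv: "outer a b *v x = cinner b x *s a"
  by (simp add: outer_def cinner_def matrix_vector_mult_def vec_eq_iff sum_distrib_left
      algebra_simps)

lemma cinner_perturbed_mv:
  "cinner x ((A + r *\<^sub>R D) *v x) = cinner x (A *v x) + of_real r * cinner x (D *v x)"
  by (simp add: matrix_vector_mult_add_rdistrib scaleR_mv cinner_add_right cinner_scaleR_right)

lemma cadj_add: "cadj (A + B) = cadj A + cadj B"
  and cadj_diff: "cadj (A - B) = cadj A - cadj B"
  and cadj_cscale: "cadj (cscale c A) = cscale (cnj c) (cadj A)"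
  and cadj_cadj [simp]: "cadj (cadj A) = A"
  and cadj_outer: "cadj (outer a b) = outer b a"
  and cadj_mat_1: "cadj (mat 1) = mat 1"
  and cadj_zero: "cadj 0 = 0"
  by (simp_all add: cadj_def cscale_def outer_def mat_def vec_eq_iff)

lemma cadj_scaleR: "cadj (r *\<^sub>R A) = r *\<^sub>R cadj A"
  by (simp add: scaleR_eq_cscale cadj_cscale)

lemma cadj_sum: "cadj (sum f S) = (\<Sum>i\<in>S. cadj (f i))"
  by (simp add: cadj_def vec_eq_iff sum_component)

lemma hermitian_add: "hermitian_op A \<Longrightarrow> hermitian_op B \<Longrightarrow> hermitian_op (A + B)"
  and hermitian_diff: "hermitian_op A \<Longrightarrow> hermitian_op B \<Longrightarrow> hermitian_op (A - B)"
  and hermitian_scaleR: "hermitian_op A \<Longrightarrow> hermitian_op (r *\<^sub>R A)"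
  and hermitian_zero: "hermitian_op 0"
  by (simp_all add: hermitian_op_def cadj_add cadj_diff cadj_scaleR cadj_def vec_eq_iff)

lemma hermitian_sum: "(\<And>i. i \<in> S \<Longrightarrow> hermitian_op (f i)) \<Longrightarrow> hermitian_op (sum f S)"
  by (simp add: hermitian_op_def cadj_sum)

lemma hermitian_real_part: "hermitian_op ((1/2::real) *\<^sub>R (A + cadj A))"
  by (simp add: hermitian_op_def cadj_scaleR cadj_add add.commute)

section \<open>Orthonormal families\<close>

definition orthonormal :: "'i set \<Rightarrow> ('i \<Rightarrow> complex^'n::finite) \<Rightarrow> bool" where
  "orthonormal I u \<longleftrightarrow> (\<forall>m\<in>I. \<forall>n\<in>I. cinner (u m) (u n) = (if m = n then 1 else 0))"

definition proj :: "'i set \<Rightarrow> ('i \<Rightarrow> complex^'n::finite) \<Rightarrow> complex^'n \<Rightarrow> complex^'n" where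
  "proj I u x = (\<Sum>m\<in>I. cinner (u m) x *s u m)"

lemma orthonormal_inj_on: "orthonormal I u \<Longrightarrow> inj_on u I"
  unfolding orthonormal_def inj_on_def by (metis zero_neq_one)

lemma orthonormal_cinner_combination:
  assumes "orthonormal I u" "finite I" "j \<in> I"
  shows "cinner (u j) (\<Sum>n\<in>I. b n *s u n) = b j"
proof -
  have "cinner (u j) (\<Sum>n\<in>I. b n *s u n) = (\<Sum>n\<in>I. if j = n then b n else 0)"
    using assms(1,3) unfolding cinner_sum_right cinner_scale_right orthonormal_def
    by (intro sum.cong) auto
  then show ?thesis
    using assms(2,3) by simp
qed

lemma orthonormal_cinner_combinations:
  assumes "orthonormal I u" "finite I"
  shows "cinner (\<Sum>m\<in>I. a m *s u m) (\<Sum>n\<in>I. b n *s u n) = (\<Sum>m\<in>I. cnj (a m) * b m)"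
  by (simp add: cinner_sum_left cinner_scale_left orthonormal_cinner_combination[OF assms])

lemma cinner_proj_residual:
  assumes "orthonormal I u" "finite I" "j \<in> I"
  shows "cinner (u j) (x - proj I u x) = 0"
  using orthonormal_cinner_combination[OF assms] by (simp add: proj_def cinner_diff_right)

lemma cinner_combination_orthogonal:
  assumes "\<forall>j\<in>I. cinner (u j) z = 0"
  shows "cinner z (\<Sum>m\<in>I. a m *s u m) = 0" "cinner (\<Sum>m\<in>I. a m *s u m) z = 0"
proof -
  have "\<forall>j\<in>I. cinner z (u j) = 0"
    using assms by (metis cnj_cinner complex_cnj_zero)
  then show "cinner z (\<Sum>m\<in>I. a m *s u m) = 0"
    by (simp add: cinner_sum_right cinner_scale_right)
  show "cinner (\<Sum>m\<in>I. a m *s u m) z = 0"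
    using assms by (simp add: cinner_sum_left cinner_scale_left)
qed

lemma (in module) independent_if_dual_functionals:
  assumes "\<And>w. w \<in> B \<Longrightarrow> \<exists>f. (\<forall>x y. f (x + y) = f x + f y) \<and> (\<forall>c x. f (scale c x) = c * f x)
      \<and> f w = 1 \<and> (\<forall>w'\<in>B. w' \<noteq> w \<longrightarrow> f w' = 0)"
  shows "independent B"
  unfolding independent_explicit_module
proof (intro allI impI)
  fix t c w
  assume t: "finite t" "t \<subseteq> B" and comb: "(\<Sum>v\<in>t. scale (c v) v) = 0" and w: "w \<in> t"
  from assms[OF subsetD[OF t(2) w]] obtain f
    where add: "\<forall>x y. f (x + y) = f x + f y" and hom: "\<forall>c x. f (scale c x) = c * f x"
      and fw: "f w = 1" and f_other: "\<forall>w'\<in>B. w' \<noteq> w \<longrightarrow> f w' = 0"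
    by blast
  have f_zero: "f 0 = 0"
    using add[rule_format, of 0 0] by simp
  have f_sum: "f (\<Sum>v\<in>S. g v) = (\<Sum>v\<in>S. f (g v))" for g and S :: "'b set"
    by (induction S rule: infinite_finite_induct) (simp_all add: f_zero add)
  have "0 = f (\<Sum>v\<in>t. scale (c v) v)"
    by (simp add: comb f_zero)
  also have "\<dots> = (\<Sum>v\<in>t. if v = w then c v else 0)"
    unfolding f_sum
  proof (rule sum.cong[OF refl])
    fix v assume "v \<in> t"
    then have "v \<noteq> w \<Longrightarrow> f v = 0"
      using f_other t(2) by blast
    then show "f (scale (c v) v) = (if v = w then c v else 0)"
      by (simp add: hom fw)
  qed
  also have "\<dots> = c w"
    using t(1) w by simp
  finally show "c w = 0" ..
qed

definition cconj :: "complex^'n::finite \<Rightarrow> complex^'n" where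
  "cconj x = (\<chi> i. cnj (x$i))"

lemma cconj_cconj [simp]: "cconj (cconj x) = x"
  by (simp add: cconj_def vec_eq_iff)

lemma cinner_cconj_scale: "cinner (cconj (c *s y)) z = c * cinner (cconj y) z"
  by (simp add: cinner_def cconj_def sum_distrib_left mult.assoc)

lemma cinner_cconj_add: "cinner (cconj (x + y)) z = cinner (cconj x) z + cinner (cconj y) z"
  by (simp add: cinner_def cconj_def sum.distrib algebra_simps)

lemma independent_cconj_orthonormal:
  assumes "orthonormal I u"
  shows "vec.independent ((\<lambda>n. cconj (u n)) ` I)"
proof (rule vec.independent_if_dual_functionals)
  fix w assume "w \<in> (\<lambda>n. cconj (u n)) ` I"
  then obtain n where n: "n \<in> I" "w = cconj (u n)"
    by blast
  let ?f = "\<lambda>y. cinner (cconj y) (u n)"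
  have add: "?f (x + y) = ?f x + ?f y" for x y
    by (rule cinner_cconj_add)
  have hom: "?f (c *s x) = c * ?f x" for c x
    by (rule cinner_cconj_scale)
  have fw: "?f w = 1"
    using assms n unfolding orthonormal_def by simp
  have other: "?f w' = 0" if "w' \<in> (\<lambda>n. cconj (u n)) ` I" "w' \<noteq> w" for w'
  proof -
    from that(1) obtain m where m: "m \<in> I" "w' = cconj (u m)"
      by blast
    have "m \<noteq> n"
      using m(2) n(2) that(2) by blast
    then show ?thesis
      using assms m n unfolding orthonormal_def by simp
  qed
  show "\<exists>f. (\<forall>x y. f (x + y) = f x + f y) \<and> (\<forall>c x. f (c *s x) = c * f x)
      \<and> f w = 1 \<and> (\<forall>w'\<in>(\<lambda>n. cconj (u n)) ` I. w' \<noteq> w \<longrightarrow> f w' = 0)"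
    by (rule exI[of _ ?f]) (use add hom fw other in blast)
qed

lemma mv_component_row: "(A *v z)$j = cinner (cconj (row j A)) z"
  by (simp add: cinner_def cconj_def row_def matrix_vector_mult_def)

lemma cconj_hermitian_mv_in_row_space:
  assumes "hermitian_op A"
  shows "cconj (A *v w) \<in> vec.span (rows A)"
proof -
  have entry: "cnj (A$i$j) = A$j$i" for i j
    using assms unfolding hermitian_op_def cadj_def by (metis vec_lambda_beta)
  have "cconj (A *v w) = (\<Sum>j\<in>UNIV. cnj (w$j) *s row j A)"
    by (simp add: vec_eq_iff cconj_def matrix_vector_mult_def sum_component row_def entry
        mult.commute)
  also have "\<dots> \<in> vec.span (rows A)"
    by (intro vec.span_sum vec.span_scale vec.span_base) (auto simp: rows_def)
  finally show ?thesis .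
qed

section \<open>Positive semidefinite operators\<close>

lemma psd_hermitian: "psd_op A \<Longrightarrow> hermitian_op A"
  by (simp add: psd_op_def)

lemma linear_coeff_zero_if_quadratic_nonneg:
  fixes a b :: real
  assumes "\<And>t. 0 \<le> 2 * t * a + t\<^sup>2 * b"
  shows "a = 0"
proof (rule ccontr)
  assume "a \<noteq> 0"
  define \<beta> where "\<beta> = \<bar>b\<bar> + 1"
  have \<beta>: "0 < \<beta>" "\<bar>b\<bar> = \<beta> - 1"
    by (simp_all add: \<beta>_def add.commute add_pos_nonneg)
  have "0 \<le> 2 * (- a / \<beta>) * a + (- a / \<beta>)\<^sup>2 * b"
    by (rule assms)
  also have "\<dots> \<le> 2 * (- a / \<beta>) * a + (- a / \<beta>)\<^sup>2 * \<bar>b\<bar>"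
    by (simp add: mult_left_mono)
  also have "\<dots> = - a\<^sup>2 * (\<beta> + 1) / \<beta>\<^sup>2"
    using \<beta>(1) by (simp add: field_simps power2_eq_square \<beta>(2))
  also have "\<dots> < 0"
    using \<open>a \<noteq> 0\<close> \<beta> by (simp add: divide_neg_pos)
  finally show False by simp
qed

lemma psd_mv_eq_0_if_cinner_eq_0:
  assumes B: "psd_op B" and z: "cinner z (B *v z) = 0"
  shows "B *v z = 0"
proof -
  define y where "y = B *v z"
  have "0 \<le> 2 * t * Re (cinner y y) + t\<^sup>2 * Re (cinner y (B *v y))" for t :: real
  proof -
    let ?w = "z + complex_of_real t *s y"
    have "cinner z (B *v y) = cinner y y"
      using hermitian_cinner[OF psd_hermitian[OF B], of z y] by (simp add: y_def)
    then have "cinner ?w (B *v ?w) = 2 * of_real t * cinner y y + of_real t ^ 2 * cinner y (B *v y)"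
      using z by (simp add: vec.add vec.scale cinner_add_left cinner_add_right cinner_scale_left
          cinner_scale_right y_def algebra_simps power2_eq_square)
    moreover have "0 \<le> Re (cinner ?w (B *v ?w))"
      using B unfolding psd_op_def by blast
    ultimately show ?thesis by simp
  qed
  then have "Re (cinner y y) = 0"
    by (rule linear_coeff_zero_if_quadratic_nonneg)
  then have "cinner y y = 0"
    by (simp add: cinner_self)
  then show ?thesis
    by (simp add: cinner_self_eq_0_iff y_def)
qed

lemma cinner_scaleR_combination_mv:
  "cinner x ((s *\<^sub>R A + t *\<^sub>R B) *v x)
    = of_real s * cinner x (A *v x) + of_real t * cinner x (B *v x)"
  by (simp add: matrix_vector_mult_add_rdistrib scaleR_mv cinner_add_right cinner_scaleR_right)

lemma convex_psd: "convex {A :: 'n::finite op. psd_op A}"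
  by (rule convexI)
    (simp add: psd_op_def hermitian_add hermitian_scaleR cinner_scaleR_combination_mv)

lemma psd_add_smaller_scaleR:
  assumes "psd_op A" "psd_op (A + \<epsilon> *\<^sub>R D)" "0 \<le> t" "t \<le> \<epsilon>"
  shows "psd_op (A + t *\<^sub>R D)"
proof (cases "\<epsilon> = 0")
  case True
  then show ?thesis using assms by simp
next
  case False
  then have "A + t *\<^sub>R D = (1 - t / \<epsilon>) *\<^sub>R A + (t / \<epsilon>) *\<^sub>R (A + \<epsilon> *\<^sub>R D)"
    by (simp add: algebra_simps)
  also have "\<dots> \<in> {A. psd_op A}"
    using assms False by (intro convexD_alt[OF convex_psd]) auto
  finally show ?thesis by simp
qed

lemma psd_scaled_identity: "0 \<le> c \<Longrightarrow> psd_op (c *\<^sub>R (mat 1 :: 'n::finite op))"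
  by (simp add: psd_op_def hermitian_op_def cadj_scaleR cadj_mat_1 scaleR_mv cinner_scaleR_right
      Re_cinner_self_nonneg)

lemma cmod_cinner_mv_le:
  fixes D :: "'n::finite op"
  shows "cmod (cinner x (D *v x)) \<le> (\<Sum>i\<in>UNIV. \<Sum>j\<in>UNIV. cmod (D$i$j)) * Re (cinner x x)"
proof -
  define S where "S = (\<Sum>k\<in>UNIV. (cmod (x$k))\<^sup>2)"
  have component_le: "(cmod (x$i))\<^sup>2 \<le> S" for i
    unfolding S_def by (rule member_le_sum) auto
  have product_le: "cmod (x$i) * cmod (x$j) \<le> S" for i j
    using sum_squares_bound[of "cmod (x$i)" "cmod (x$j)"] component_le[of i] component_le[of j]
    by (simp add: power2_eq_square)
  have term_le: "cmod (cnj (x$i) * D$i$j * x$j) \<le> cmod (D$i$j) * S" for i j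
  proof -
    have "cmod (cnj (x$i) * D$i$j * x$j) = cmod (D$i$j) * (cmod (x$i) * cmod (x$j))"
      by (simp add: norm_mult)
    also have "\<dots> \<le> cmod (D$i$j) * S"
      using product_le by (rule mult_left_mono) simp
    finally show ?thesis .
  qed
  have "cmod (cinner x (D *v x)) = cmod (\<Sum>i\<in>UNIV. \<Sum>j\<in>UNIV. cnj (x$i) * D$i$j * x$j)"
    by (simp add: cinner_def matrix_vector_mult_def sum_distrib_left mult.assoc)
  also have "\<dots> \<le> (\<Sum>i\<in>UNIV. \<Sum>j\<in>UNIV. cmod (cnj (x$i) * D$i$j * x$j))"
    by (rule order_trans[OF norm_sum sum_mono[OF norm_sum]])
  also have "\<dots> \<le> (\<Sum>i\<in>UNIV. \<Sum>j\<in>UNIV. cmod (D$i$j) * S)"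
    by (intro sum_mono term_le)
  also have "\<dots> = (\<Sum>i\<in>UNIV. \<Sum>j\<in>UNIV. cmod (D$i$j)) * Re (cinner x x)"
    by (simp add: cinner_self S_def sum_distrib_right)
  finally show ?thesis .
qed

text \<open>\<open>p\<close> stands for the projection onto the support of \<open>A\<close>; for uniformly positive \<open>A\<close> it is the
  identity.\<close>

lemma psd_two_sided_perturbation:
  fixes A D :: "'n::finite op"
  assumes hA: "hermitian_op A" and hD: "hermitian_op D" and c: "0 < c"
    and lower: "\<And>x. c * Re (cinner (p x) (p x)) \<le> Re (cinner x (A *v x))"
    and support: "\<And>x. cinner x (D *v x) = cinner (p x) (D *v p x)"
  shows "\<exists>\<epsilon>>0. psd_op (A + \<epsilon> *\<^sub>R D) \<and> psd_op (A - \<epsilon> *\<^sub>R D)"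
proof -
  define M where "M = (\<Sum>i\<in>UNIV. \<Sum>j\<in>UNIV. cmod (D$i$j))"
  have "0 \<le> M"
    unfolding M_def by (intro sum_nonneg) auto
  define \<epsilon> where "\<epsilon> = c / (M + 1)"
  have \<epsilon>: "0 < \<epsilon>" "\<epsilon> * M \<le> c"
    using c \<open>0 \<le> M\<close> by (simp_all add: \<epsilon>_def field_simps)
  have "psd_op (A + \<delta> *\<^sub>R D)" if \<delta>: "\<bar>\<delta>\<bar> = \<epsilon>" for \<delta>
  proof -
    have "0 \<le> Re (cinner x ((A + \<delta> *\<^sub>R D) *v x))" for x
    proof -
      define N where "N = Re (cinner (p x) (p x))"
      have "0 \<le> N"
        unfolding N_def by (rule Re_cinner_self_nonneg)
      have "\<bar>Re (cinner x (D *v x))\<bar> \<le> M * N"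
        using abs_Re_le_cmod[of "cinner (p x) (D *v p x)"] cmod_cinner_mv_le[of "p x" D]
        unfolding support[of x] M_def N_def by linarith
      then have "\<bar>\<delta> * Re (cinner x (D *v x))\<bar> \<le> \<epsilon> * (M * N)"
        by (simp add: abs_mult \<delta> \<epsilon>(1) mult_left_mono)
      also have "\<dots> \<le> c * N"
        using \<epsilon>(2) \<open>0 \<le> N\<close> by (metis mult.assoc mult_right_mono)
      also have "\<dots> \<le> Re (cinner x (A *v x))"
        unfolding N_def by (rule lower)
      finally have "- (\<delta> * Re (cinner x (D *v x))) \<le> Re (cinner x (A *v x))"
        by (rule abs_le_D2)
      then show ?thesis
        by (simp add: cinner_perturbed_mv)
    qed
    then show ?thesis
      using hermitian_add[OF hA hermitian_scaleR[OF hD]] unfolding psd_op_def by blast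
  qed
  from this[of \<epsilon>] this[of "- \<epsilon>"] show ?thesis
    using \<epsilon>(1) by auto
qed

section \<open>Supports of positive operators\<close>

definition outer_products :: "'i set \<Rightarrow> ('i \<Rightarrow> complex^'n::finite) \<Rightarrow> 'n op set" where
  "outer_products I u = {outer (u m) (u n) | m n. m \<in> I \<and> n \<in> I}"

definition support_basis :: "'n::finite op \<Rightarrow> (nat \<Rightarrow> complex^'n) \<Rightarrow> bool" where
  "support_basis A u \<longleftrightarrow> orthonormal {..<rank A} u \<and> (\<forall>n<rank A. \<exists>c. c \<noteq> 0 \<and> A *v u n = c *s u n)"

lemma eig_basis_iff: "eig_basis P v \<longleftrightarrow> (\<forall>e. support_basis (P$e) (v e))"
  by (auto simp: eig_basis_def support_basis_def orthonormal_def)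

lemma cadj_outer_products: "X \<in> outer_products I u \<Longrightarrow> cadj X \<in> outer_products I u"
  unfolding outer_products_def by (auto simp: cadj_outer) blast

lemma cadj_in_opc_span:
  assumes "\<And>X. X \<in> B \<Longrightarrow> cadj X \<in> B" and "X \<in> opc.span B"
  shows "cadj X \<in> opc.span B"
  using assms(2)
proof (induction rule: opc.span_induct_alt)
  case base
  then show ?case by (simp add: cadj_zero opc.span_zero)
next
  case (step c x y)
  then show ?case
    using assms(1) by (simp add: cadj_add cadj_cscale opc.span_add opc.span_scale opc.span_base)
qed

lemma span_outer_products_kills:
  assumes "X \<in> opc.span (outer_products I u)" and "\<forall>j\<in>I. cinner (u j) z = 0"
  shows "X *v z = 0"
  using assms(1)
proof (induction rule: opc.span_induct_alt)
  case base
  then show ?case by simp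
next
  case (step c x y)
  then obtain m n where "x = outer (u m) (u n)" "n \<in> I"
    unfolding outer_products_def by blast
  then show ?case
    using step assms(2) by (simp add: outer_mv matrix_vector_mult_add_rdistrib cscale_mv)
qed

lemma hermitian_mv_eq_proj:
  assumes on: "orthonormal I u" and fin: "finite I" and hD: "hermitian_op D"
    and kills: "\<And>z. \<forall>j\<in>I. cinner (u j) z = 0 \<Longrightarrow> D *v z = 0"
  shows "D *v y = proj I u (D *v y)"
proof -
  define w where "w = D *v y - proj I u (D *v y)"
  have w_perp: "\<forall>j\<in>I. cinner (u j) w = 0"
    unfolding w_def using cinner_proj_residual[OF on fin] by blast
  have "cinner w w = cinner w (D *v y) - cinner w (proj I u (D *v y))"
    by (simp add: w_def cinner_diff_right)
  also have "cinner w (D *v y) = 0"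
    by (simp add: hermitian_cinner[OF hD] kills[OF w_perp])
  also have "cinner w (proj I u (D *v y)) = 0"
    unfolding proj_def by (rule cinner_combination_orthogonal(1)[OF w_perp])
  finally have "w = 0"
    by (simp add: cinner_self_eq_0_iff)
  then show ?thesis
    by (simp add: w_def)
qed

lemma hermitian_in_span_outer_products:
  fixes D :: "'n::finite op"
  assumes on: "orthonormal I u" and fin: "finite I" and hD: "hermitian_op D"
    and kills: "\<And>z. \<forall>j\<in>I. cinner (u j) z = 0 \<Longrightarrow> D *v z = 0"
  shows "D \<in> opc.span (outer_products I u)"
proof -
  note range = hermitian_mv_eq_proj[OF on fin hD kills]
  define R where
    "R = (\<Sum>n\<in>I. \<Sum>m\<in>I. cscale (cinner (u m) (D *v u n)) (outer (u m) (u n)))"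
  have "D *v x = R *v x" for x
  proof -
    have "D *v (x - proj I u x) = 0"
      using cinner_proj_residual[OF on fin] by (intro kills) blast
    then have "D *v x = D *v proj I u x"
      by (simp add: vec.diff)
    also have "\<dots> = (\<Sum>n\<in>I. cinner (u n) x *s (D *v u n))"
      by (simp add: proj_def vec.sum vec.scale)
    also have "\<dots> = (\<Sum>n\<in>I. cinner (u n) x *s proj I u (D *v u n))"
      by (simp only: range[symmetric])
    also have "\<dots> = R *v x"
      by (simp add: R_def proj_def sum_mv cscale_mv outer_mv vec.scale_sum_right vector_smult_assoc
          mult.commute)
    finally show ?thesis .
  qed
  then have "D = R"
    by (simp add: matrix_eq)
  also have "R \<in> opc.span (outer_products I u)"
    unfolding R_def by (intro opc.span_sum opc.span_scale opc.span_base)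
      (auto simp: outer_products_def)
  finally show ?thesis .
qed

lemma psd_eigenvalue:
  assumes A: "psd_op A" and u: "cinner u u = 1" and eig: "A *v u = c *s u"
  shows "c = of_real (Re c)" "0 \<le> Re c"
proof -
  have c: "c = cinner u (A *v u)"
    using u eig by (simp add: cinner_scale_right)
  show "c = of_real (Re c)"
    unfolding c by (rule hermitian_cinner_real[OF psd_hermitian[OF A]])
  show "0 \<le> Re c"
    unfolding c using A by (simp add: psd_op_def)
qed

lemma cinner_proj_self:
  assumes "orthonormal I u" "finite I"
  shows "Re (cinner (proj I u x) (proj I u x)) = (\<Sum>m\<in>I. (cmod (cinner (u m) x))\<^sup>2)"
  unfolding proj_def orthonormal_cinner_combinations[OF assms]
  by (simp add: cmod_power2 flip: power2_eq_square)

lemma cinner_mv_eigen_split: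
  assumes hA: "hermitian_op A" and on: "orthonormal I u" and fin: "finite I"
    and eigen: "\<And>n. n \<in> I \<Longrightarrow> A *v u n = of_real (ev n) *s u n"
  shows "Re (cinner x (A *v x))
    = (\<Sum>m\<in>I. (cmod (cinner (u m) x))\<^sup>2 * ev m)
      + Re (cinner (x - proj I u x) (A *v (x - proj I u x)))"
proof -
  define a where "a m = cinner (u m) x" for m
  define p where "p = proj I u x"
  define z where "z = x - p"
  have p: "p = (\<Sum>m\<in>I. a m *s u m)"
    by (simp add: p_def proj_def a_def)
  have z_perp: "\<forall>j\<in>I. cinner (u j) z = 0"
    unfolding z_def p_def using cinner_proj_residual[OF on fin] by blast
  have Ap: "A *v p = (\<Sum>m\<in>I. (a m * of_real (ev m)) *s u m)"
    unfolding p vec.sum vec.scale by (intro sum.cong refl) (simp add: eigen vector_smult_assoc)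
  have x: "x = p + z"
    by (simp add: z_def)
  have "cinner x (A *v x)
    = cinner p (A *v p) + cinner p (A *v z) + cinner z (A *v p) + cinner z (A *v z)"
    unfolding x by (simp add: vec.add cinner_add_left cinner_add_right)
  also have "cinner z (A *v p) = 0"
    unfolding Ap by (rule cinner_combination_orthogonal(1)[OF z_perp])
  also have "cinner p (A *v z) = 0"
    unfolding hermitian_cinner[OF hA] Ap by (rule cinner_combination_orthogonal(2)[OF z_perp])
  also have "cinner p (A *v p) = of_real (\<Sum>m\<in>I. (cmod (a m))\<^sup>2 * ev m)"
    unfolding Ap unfolding p orthonormal_cinner_combinations[OF on fin] of_real_sum
    by (intro sum.cong refl) (metis complex_norm_square mult.assoc mult.commute of_real_mult)
  finally show ?thesis
    by (simp add: a_def z_def p_def)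
qed

lemma psd_positive_eigenvalues:
  assumes A: "psd_op A" and on: "orthonormal I u"
    and eig: "\<forall>n\<in>I. \<exists>c. c \<noteq> 0 \<and> A *v u n = c *s u n"
  obtains ev where "\<And>n. n \<in> I \<Longrightarrow> A *v u n = of_real (ev n) *s u n" "\<And>n. n \<in> I \<Longrightarrow> 0 < ev n"
proof -
  from bchoice[OF eig] obtain \<mu> where \<mu>: "\<forall>n\<in>I. \<mu> n \<noteq> 0 \<and> A *v u n = \<mu> n *s u n"
    by blast
  have ev: "A *v u n = of_real (Re (\<mu> n)) *s u n \<and> 0 < Re (\<mu> n)" if "n \<in> I" for n
  proof -
    have "cinner (u n) (u n) = 1"
      using on that by (simp add: orthonormal_def)
    then have real: "of_real (Re (\<mu> n)) = \<mu> n" and "0 \<le> Re (\<mu> n)"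
      using psd_eigenvalue[OF A] \<mu> that by (metis, blast)
    moreover have "Re (\<mu> n) \<noteq> 0"
      using real \<mu> that by force
    ultimately show ?thesis
      using \<mu> that by simp
  qed
  show thesis
    by (rule that[of "\<lambda>n. Re (\<mu> n)"]) (simp_all add: ev)
qed

lemma psd_support_lower_bound:
  assumes A: "psd_op A" and on: "orthonormal I u" and fin: "finite I"
    and eig: "\<forall>n\<in>I. \<exists>c. c \<noteq> 0 \<and> A *v u n = c *s u n"
  shows "\<exists>c>0. \<forall>x. c * Re (cinner (proj I u x) (proj I u x)) \<le> Re (cinner x (A *v x))"
proof -
  obtain ev where eigen: "\<And>n. n \<in> I \<Longrightarrow> A *v u n = of_real (ev n) *s u n"
    and pos: "\<And>n. n \<in> I \<Longrightarrow> 0 < ev n"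
    using psd_positive_eigenvalues[OF A on eig] by blast
  define c where "c = Min (insert 1 (ev ` I))"
  have c_pos: "0 < c"
    unfolding c_def using fin pos by (subst Min_gr_iff) auto
  have c_le: "c \<le> ev n" if "n \<in> I" for n
    unfolding c_def using fin that by (intro Min_le) auto
  have "c * Re (cinner (proj I u x) (proj I u x)) \<le> Re (cinner x (A *v x))" for x
  proof -
    have "c * Re (cinner (proj I u x) (proj I u x)) = (\<Sum>m\<in>I. (cmod (cinner (u m) x))\<^sup>2 * c)"
      by (simp add: cinner_proj_self[OF on fin] sum_distrib_left mult.commute)
    also have "\<dots> \<le> (\<Sum>m\<in>I. (cmod (cinner (u m) x))\<^sup>2 * ev m)"
      by (intro sum_mono mult_left_mono c_le) auto
    also have "\<dots> \<le> Re (cinner x (A *v x))"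
    proof -
      have "Re (cinner x (A *v x)) = (\<Sum>m\<in>I. (cmod (cinner (u m) x))\<^sup>2 * ev m)
          + Re (cinner (x - proj I u x) (A *v (x - proj I u x)))"
        by (rule cinner_mv_eigen_split[OF psd_hermitian[OF A] on fin]) (rule eigen)
      moreover have "0 \<le> Re (cinner (x - proj I u x) (A *v (x - proj I u x)))"
        using A by (simp add: psd_op_def)
      ultimately show ?thesis
        by linarith
    qed
    finally show ?thesis .
  qed
  then show ?thesis
    using c_pos by blast
qed

text \<open>The library's \<open>rank\<close> is the dimension of the row space. The rows of a Hermitian operator are
  conjugates of vectors in its range, so the conjugated support basis, \<open>rank A\<close> independent vectors
  in the row space, spans it.\<close>

lemma row_space_subset_span_cconj_support:
  fixes A :: "'n::finite op"
  assumes hA: "hermitian_op A" and su: "support_basis A u"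
  shows "vec.span (rows A) \<subseteq> vec.span ((\<lambda>n. cconj (u n)) ` {..<rank A})"
proof -
  let ?C = "(\<lambda>n. cconj (u n)) ` {..<rank A}"
  have on: "orthonormal {..<rank A} u" and eig: "\<forall>n<rank A. \<exists>c. c \<noteq> 0 \<and> A *v u n = c *s u n"
    using su by (simp_all add: support_basis_def)
  have "?C \<subseteq> vec.span (rows A)"
  proof
    fix y assume "y \<in> ?C"
    then obtain n where n: "n < rank A" "y = cconj (u n)"
      by blast
    from eig[rule_format, OF n(1)] obtain c where "c \<noteq> 0" "A *v u n = c *s u n"
      by (elim exE conjE)
    then have "u n = A *v (inverse c *s u n)"
      by (simp add: vec.scale vector_smult_assoc)
    then show "y \<in> vec.span (rows A)"
      using cconj_hermitian_mv_in_row_space[OF hA, of "inverse c *s u n"] n(2) by simp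
  qed
  moreover have "inj_on (\<lambda>n. cconj (u n)) {..<rank A}"
    using orthonormal_inj_on[OF on] unfolding inj_on_def by (metis cconj_cconj)
  then have "card ?C = rank A"
    by (simp add: card_image)
  ultimately show ?thesis
    using vec.card_ge_dim_independent[OF _ independent_cconj_orthonormal[OF on]]
    by (simp add: row_rank_def_gen vec.dim_span)
qed

lemma hermitian_kills_complement_of_support:
  fixes A :: "'n::finite op"
  assumes hA: "hermitian_op A" and su: "support_basis A u"
    and z: "\<forall>j<rank A. cinner (u j) z = 0"
  shows "A *v z = 0"
proof -
  have perp: "cinner (cconj y) z = 0" if "y \<in> vec.span ((\<lambda>n. cconj (u n)) ` {..<rank A})" for y
    using that
  proof (induction rule: vec.span_induct_alt)
    case base
    then show ?case by (simp add: cconj_def cinner_def)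
  next
    case (step c x y)
    then show ?case
      using z by (auto simp: cinner_cconj_add cinner_cconj_scale)
  qed
  have "row j A \<in> vec.span (rows A)" for j
    by (auto simp: rows_def intro: vec.span_base)
  then show "A *v z = 0"
    using row_space_subset_span_cconj_support[OF hA su]
    by (simp add: vec_eq_iff mv_component_row perp subsetD)
qed

lemma psd_perturbation_kills_kernel:
  assumes A: "psd_op A" and hD: "hermitian_op D" and \<epsilon>: "0 < \<epsilon>"
    and plus: "psd_op (A + \<epsilon> *\<^sub>R D)" and minus: "psd_op (A - \<epsilon> *\<^sub>R D)"
    and Az: "A *v z = 0"
  shows "D *v z = 0"
proof -
  have form: "cinner z ((A + r *\<^sub>R D) *v z) = of_real r * cinner z (D *v z)" for r
    by (simp add: cinner_perturbed_mv Az)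
  have "0 \<le> Re (cinner z ((A + \<epsilon> *\<^sub>R D) *v z))" "0 \<le> Re (cinner z ((A + (- \<epsilon>) *\<^sub>R D) *v z))"
    using plus minus unfolding psd_op_def by simp_all
  then have "Re (cinner z (D *v z)) = 0"
    using \<epsilon> unfolding form by (simp add: zero_le_mult_iff mult_le_0_iff)
  then have "cinner z ((A + \<epsilon> *\<^sub>R D) *v z) = 0"
    unfolding form by (subst hermitian_cinner_real[OF hD]) simp
  then have "(A + \<epsilon> *\<^sub>R D) *v z = 0"
    by (rule psd_mv_eq_0_if_cinner_eq_0[OF plus])
  then show ?thesis
    using \<epsilon> by (simp add: matrix_vector_mult_add_rdistrib scaleR_mv Az)
qed

lemma cinner_mv_proj_if_in_span:
  assumes on: "orthonormal I u" and fin: "finite I"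
    and D: "D \<in> opc.span (outer_products I u)" and hD: "hermitian_op D"
  shows "cinner x (D *v x) = cinner (proj I u x) (D *v proj I u x)"
proof -
  define z where "z = x - proj I u x"
  have "D *v z = 0"
    unfolding z_def using cinner_proj_residual[OF on fin]
    by (intro span_outer_products_kills[OF D]) blast
  moreover have "x = proj I u x + z"
    by (simp add: z_def)
  ultimately show ?thesis
    by (metis cinner_add_left cinner_zero_right hermitian_cinner[OF hD] vec.add vec.zero
        add.right_neutral)
qed

lemma psd_perturbable_iff_in_span:
  fixes A D :: "'n::finite op"
  assumes A: "psd_op A" and su: "support_basis A u" and hD: "hermitian_op D"
  shows "(\<exists>\<epsilon>>0. psd_op (A + \<epsilon> *\<^sub>R D) \<and> psd_op (A - \<epsilon> *\<^sub>R D))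
    \<longleftrightarrow> D \<in> opc.span (outer_products {..<rank A} u)"
proof
  have on: "orthonormal {..<rank A} u"
    using su by (simp add: support_basis_def)
  assume "\<exists>\<epsilon>>0. psd_op (A + \<epsilon> *\<^sub>R D) \<and> psd_op (A - \<epsilon> *\<^sub>R D)"
  then obtain \<epsilon> where \<epsilon>: "0 < \<epsilon>" "psd_op (A + \<epsilon> *\<^sub>R D)" "psd_op (A - \<epsilon> *\<^sub>R D)"
    by blast
  show "D \<in> opc.span (outer_products {..<rank A} u)"
  proof (rule hermitian_in_span_outer_products[OF on finite_lessThan hD])
    fix z assume "\<forall>j\<in>{..<rank A}. cinner (u j) z = 0"
    then have "A *v z = 0"
      using hermitian_kills_complement_of_support[OF psd_hermitian[OF A] su] by simp
    then show "D *v z = 0"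
      by (rule psd_perturbation_kills_kernel[OF A hD \<epsilon>])
  qed
next
  have on: "orthonormal {..<rank A} u" and eig: "\<forall>n\<in>{..<rank A}. \<exists>c. c \<noteq> 0 \<and> A *v u n = c *s u n"
    using su by (simp_all add: support_basis_def)
  assume D: "D \<in> opc.span (outer_products {..<rank A} u)"
  obtain c where "0 < c"
    and "\<And>x. c * Re (cinner (proj {..<rank A} u x) (proj {..<rank A} u x)) \<le> Re (cinner x (A *v x))"
    using psd_support_lower_bound[OF A on finite_lessThan eig] by blast
  from psd_two_sided_perturbation[OF psd_hermitian[OF A] hD this
      cinner_mv_proj_if_in_span[OF on finite_lessThan D hD]]
  show "\<exists>\<epsilon>>0. psd_op (A + \<epsilon> *\<^sub>R D) \<and> psd_op (A - \<epsilon> *\<^sub>R D)" .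
qed

section \<open>Dimension counting\<close>

definition hs_inner :: "'n::finite op \<Rightarrow> 'n op \<Rightarrow> complex" where
  "hs_inner X Y = (\<Sum>i\<in>UNIV. \<Sum>j\<in>UNIV. cnj (X$i$j) * Y$i$j)"

lemma hs_inner_outer: "hs_inner (outer a b) (outer c d) = cinner a c * cinner d b"
proof -
  have "hs_inner (outer a b) (outer c d)
      = (\<Sum>i\<in>UNIV. \<Sum>j\<in>UNIV. (cnj (a$i) * c$i) * (cnj (d$j) * b$j))"
    by (simp add: hs_inner_def outer_def mult_ac)
  also have "\<dots> = cinner a c * cinner d b"
    unfolding cinner_def sum_product ..
  finally show ?thesis .
qed

lemma orthonormal_outer_products:
  assumes on: "orthonormal I u" and fin: "finite I"
  shows "opc.independent (outer_products I u)" "card (outer_products I u) = card I ^ 2"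
proof -
  define f where "f p = outer (u (fst p)) (u (snd p))" for p
  have image: "outer_products I u = f ` (I \<times> I)"
    unfolding outer_products_def f_def image_def by force
  have hs_f: "hs_inner (f p) (f q) = (if p = q then 1 else 0)" if "p \<in> I \<times> I" "q \<in> I \<times> I" for p q
    using on that unfolding f_def hs_inner_outer orthonormal_def by (auto simp: prod_eq_iff)
  have inj: "inj_on f (I \<times> I)"
    by (rule inj_onI) (metis hs_f zero_neq_one)
  show "card (outer_products I u) = card I ^ 2"
    unfolding image card_image[OF inj] by (simp add: card_cartesian_product power2_eq_square)
  show "opc.independent (outer_products I u)"
  proof (rule opc.independent_if_dual_functionals)
    fix w assume "w \<in> outer_products I u"
    then obtain p where p: "p \<in> I \<times> I" "w = f p"
      unfolding image by blast
    have add: "hs_inner w (x + y) = hs_inner w x + hs_inner w y" for x y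
      by (simp add: hs_inner_def algebra_simps sum.distrib)
    have hom: "hs_inner w (cscale c x) = c * hs_inner w x" for c x
      by (simp add: hs_inner_def cscale_def sum_distrib_left algebra_simps)
    have other: "hs_inner w w' = (if w' = w then 1 else 0)" if "w' \<in> outer_products I u" for w'
      using that p hs_f unfolding image by auto
    show "\<exists>g. (\<forall>x y. g (x + y) = g x + g y) \<and> (\<forall>c x. g (cscale c x) = c * g x)
        \<and> g w = 1 \<and> (\<forall>w'\<in>outer_products I u. w' \<noteq> w \<longrightarrow> g w' = 0)"
      by (rule exI[of _ "hs_inner w"]) (use add hom other \<open>w \<in> outer_products I u\<close> in auto)
  qed
qed

lemma opc_dim_span_outer_products:
  assumes "orthonormal I u" "finite I"
  shows "opc.dim (opc.span (outer_products I u)) = card I ^ 2"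
  using orthonormal_outer_products[OF assms] by (simp add: opc.dim_span opc.dim_eq_card_independent)

lemma cinner_axis_left: "cinner (axis m c) y = cnj c * y$m"
proof -
  have "cinner (axis m c) y = (\<Sum>k\<in>UNIV. if k = m then cnj c * y$k else 0)"
    unfolding cinner_def by (intro sum.cong) (auto simp: axis_def)
  then show ?thesis
    by simp
qed

lemma orthonormal_axis: "orthonormal UNIV (\<lambda>i::'n::finite. axis i (1::complex))"
  unfolding orthonormal_def cinner_axis_left by (simp add: axis_def)

lemma opc_span_outer_axis:
  "opc.span (outer_products UNIV (\<lambda>i::'n::finite. axis i (1::complex))) = UNIV"
proof -
  have "A \<in> opc.span (outer_products UNIV (\<lambda>i. axis i 1))" for A :: "'n op"
  proof -
    have "(\<Sum>i\<in>UNIV. \<Sum>j\<in>UNIV. cscale (A$i$j) (outer (axis i 1) (axis j 1))) $ p $ q = A$p$q" for p q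
    proof -
      have "(\<Sum>i\<in>UNIV. \<Sum>j\<in>UNIV. cscale (A$i$j) (outer (axis i 1) (axis j 1))) $ p $ q
          = (\<Sum>i\<in>UNIV. \<Sum>j\<in>UNIV. if j = q then if i = p then A$i$j else 0 else 0)"
        unfolding sum_component by (intro sum.cong refl) (simp add: cscale_def outer_def axis_def)
      then show ?thesis
        by simp
    qed
    then have "A = (\<Sum>i\<in>UNIV. \<Sum>j\<in>UNIV. cscale (A$i$j) (outer (axis i 1) (axis j 1)))"
      by (simp add: vec_eq_iff)
    also have "\<dots> \<in> opc.span (outer_products UNIV (\<lambda>i. axis i 1))"
      by (intro opc.span_sum opc.span_scale opc.span_base) (auto simp: outer_products_def)
    finally show ?thesis .
  qed
  then show ?thesis
    by auto
qed

lemma opc_dim_UNIV: "opc.dim (UNIV :: 'n::finite op set) = CARD('n)\<^sup>2"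
  using opc_dim_span_outer_products[OF orthonormal_axis finite_class.finite_UNIV]
  by (simp add: opc_span_outer_axis)

lemma subspace_if_opc_subspace: "opc.subspace S \<Longrightarrow> subspace S"
  unfolding subspace_def opc.subspace_def by (simp add: scaleR_eq_cscale)

definition hermitian_part :: "'n::finite op set \<Rightarrow> 'n op set" where
  "hermitian_part T = {A \<in> T. hermitian_op A}"

lemma subspace_hermitian_part:
  assumes "opc.subspace T"
  shows "subspace (hermitian_part T)"
  using subspace_if_opc_subspace[OF assms]
  unfolding subspace_def hermitian_part_def
  by (auto intro: hermitian_add hermitian_scaleR hermitian_zero)

lemma opc_independent_if_hermitian:
  assumes indep: "independent C" and herm: "\<And>A. A \<in> C \<Longrightarrow> hermitian_op A"
  shows "opc.independent C"
  unfolding opc.independent_explicit_module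
proof (intro allI impI)
  fix t z v
  assume t: "finite t" "t \<subseteq> C" and comb: "(\<Sum>v\<in>t. cscale (z v) v) = 0" and v: "v \<in> t"
  have comb_cnj: "(\<Sum>v\<in>t. cscale (cnj (z v)) v) = 0"
  proof -
    have "(\<Sum>v\<in>t. cscale (cnj (z v)) v) = cadj (\<Sum>v\<in>t. cscale (z v) v)"
      unfolding cadj_sum cadj_cscale using t(2) herm
      by (intro sum.cong refl) (auto simp: hermitian_op_def)
    then show ?thesis
      by (simp add: comb cadj_zero)
  qed
  have "(\<Sum>v\<in>t. (2 * Re (z v)) *\<^sub>R v) = (\<Sum>v\<in>t. cscale (z v) v) + (\<Sum>v\<in>t. cscale (cnj (z v)) v)"
    unfolding sum.distrib[symmetric] scaleR_eq_cscale
    by (intro sum.cong refl) (simp add: cscale_def vec_eq_iff complex_eq_iff)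
  then have "(\<Sum>v\<in>t. (2 * Re (z v)) *\<^sub>R v) = 0"
    by (simp add: comb comb_cnj)
  then have "2 * Re (z v) = 0"
    by (rule real_vector.independentD[OF indep t(1,2) _ v])
  have "(\<Sum>v\<in>t. (2 * Im (z v)) *\<^sub>R v)
      = cscale (- \<i>) ((\<Sum>v\<in>t. cscale (z v) v) - (\<Sum>v\<in>t. cscale (cnj (z v)) v))"
    unfolding sum_subtractf[symmetric] opc.scale_sum_right scaleR_eq_cscale
    by (intro sum.cong refl) (simp add: cscale_def vec_eq_iff complex_eq_iff algebra_simps)
  also have "\<dots> = 0"
    by (simp only: comb comb_cnj) (simp add: cscale_def vec_eq_iff)
  finally have "(\<Sum>v\<in>t. (2 * Im (z v)) *\<^sub>R v) = 0" .
  then have "2 * Im (z v) = 0"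
    by (rule real_vector.independentD[OF indep t(1,2) _ v])
  with \<open>2 * Re (z v) = 0\<close> show "z v = 0"
    by (simp add: complex_eq_iff)
qed

lemma real_part_in_hermitian_part:
  assumes T: "opc.subspace T" and adj: "\<And>A. A \<in> T \<Longrightarrow> cadj A \<in> T" and A: "A \<in> T"
  shows "(1/2::real) *\<^sub>R (A + cadj A) \<in> hermitian_part T"
proof -
  have "(1/2::real) *\<^sub>R (A + cadj A) \<in> T"
    unfolding scaleR_eq_cscale using A adj T by (intro opc.subspace_scale opc.subspace_add) auto
  then show ?thesis
    by (simp add: hermitian_part_def hermitian_real_part)
qed

lemma opc_span_hermitian_part:
  assumes T: "opc.subspace T" and adj: "\<And>A. A \<in> T \<Longrightarrow> cadj A \<in> T"
  shows "T \<subseteq> opc.span (hermitian_part T)"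
proof
  fix A assume A: "A \<in> T"
  let ?re = "\<lambda>B. (1/2::real) *\<^sub>R (B + cadj B)"
  have "A = ?re A + cscale \<i> (?re (cscale (- \<i>) A))"
    by (simp add: vec_eq_iff cscale_def cadj_def scaleR_vec_def field_simps)
  also have "\<dots> \<in> opc.span (hermitian_part T)"
    using A opc.subspace_scale[OF T A, of "- \<i>"]
    by (intro opc.span_add opc.span_scale opc.span_base real_part_in_hermitian_part[OF T adj])
  finally show "A \<in> opc.span (hermitian_part T)" .
qed

lemma dim_hermitian_part:
  assumes T: "opc.subspace T" and adj: "\<And>A. A \<in> T \<Longrightarrow> cadj A \<in> T"
  shows "dim (hermitian_part T) = opc.dim T"
proof -
  obtain C where C: "C \<subseteq> hermitian_part T" "independent C" "hermitian_part T \<subseteq> span C"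
    "card C = dim (hermitian_part T)"
    using basis_exists by blast
  have "span C \<subseteq> opc.span C"
    by (rule span_minimal[OF opc.span_superset subspace_if_opc_subspace[OF opc.subspace_span]])
  then have "T \<subseteq> opc.span C"
    using opc_span_hermitian_part[OF T adj] C(3) opc.span_mono[of "hermitian_part T" "opc.span C"]
    by (auto simp: opc.span_span)
  moreover have "C \<subseteq> T"
    using C(1) by (auto simp: hermitian_part_def)
  moreover have "opc.independent C"
    by (rule opc_independent_if_hermitian[OF C(2)]) (use C(1) in \<open>auto simp: hermitian_part_def\<close>)
  ultimately show ?thesis
    using opc.basis_card_eq_dim C(4) by metis
qed

lemma image_kernel_orthogonal_complement:
  fixes f :: "'a::euclidean_space \<Rightarrow> 'b::euclidean_space"
  assumes f: "linear f" and V: "subspace V"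
    and W: "W = {y\<in>V. \<forall>x\<in>{x\<in>V. f x = 0}. orthogonal x y}"
  shows "f ` W = f ` V"
proof
  define K where "K = {x\<in>V. f x = 0}"
  have "subspace K"
    using V f unfolding K_def subspace_def by (auto simp: linear_add linear_scale linear_0)
  then have span_K: "span K = K"
    by (simp add: span_eq_iff)
  show "f ` W \<subseteq> f ` V"
    unfolding W by auto
  show "f ` V \<subseteq> f ` W"
  proof
    fix b assume "b \<in> f ` V"
    then obtain v where v: "v \<in> V" "b = f v"
      by blast
    obtain y z where yz: "y \<in> span K" "\<And>w. w \<in> span K \<Longrightarrow> orthogonal z w" "v = y + z"
      using orthogonal_subspace_decomp_exists[of K v] by metis
    have "y \<in> K"
      using yz(1) span_K by simp
    then have "y \<in> V" "f y = 0"
      by (simp_all add: K_def)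
    then have "z \<in> V"
      using subspace_diff[OF V v(1), of y] yz(3) by simp
    moreover have "orthogonal x z" if "x \<in> K" for x
      using yz(2)[OF span_base[OF that]] by (simp add: orthogonal_commute)
    ultimately have "z \<in> W"
      by (simp add: W K_def)
    moreover have "f z = b"
      using yz(3) v(2) \<open>f y = 0\<close> by (simp add: linear_add[OF f])
    ultimately show "b \<in> f ` W"
      by blast
  qed
qed

lemma inj_on_kernel_orthogonal_complement:
  fixes f :: "'a::euclidean_space \<Rightarrow> 'b::euclidean_space"
  assumes f: "linear f" and V: "subspace V"
    and W: "W = {y\<in>V. \<forall>x\<in>{x\<in>V. f x = 0}. orthogonal x y}"
  shows "inj_on f W"
proof (rule inj_onI)
  fix x y assume xy: "x \<in> W" "y \<in> W" "f x = f y"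
  then have "x - y \<in> V" "f (x - y) = 0"
    using subspace_diff[OF V] by (simp_all add: W linear_diff[OF f])
  then have "orthogonal (x - y) (x - y)"
    using xy(1,2) unfolding W by (simp add: orthogonal_clauses)
  then show "x = y"
    by (simp add: orthogonal_def)
qed

lemma dim_kernel_add_dim_image:
  fixes f :: "'a::euclidean_space \<Rightarrow> 'b::euclidean_space"
  assumes f: "linear f" and V: "subspace V"
  shows "dim {x\<in>V. f x = 0} + dim (f ` V) = dim V"
proof -
  define W where "W = {y\<in>V. \<forall>x\<in>{x\<in>V. f x = 0}. orthogonal x y}"
  have "subspace {x\<in>V. f x = 0}"
    using V f unfolding subspace_def by (auto simp: linear_add linear_scale linear_0)
  then have "dim W + dim {x\<in>V. f x = 0} = dim V"
    unfolding W_def by (rule dim_subspace_orthogonal_to_vectors[OF _ V]) auto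
  moreover have "subspace W"
    using V unfolding W_def subspace_def by (auto simp: orthogonal_clauses)
  then have "dim (f ` W) = dim W"
    using inj_on_kernel_orthogonal_complement[OF f V W_def]
    by (intro dim_image_eq[OF f]) (simp add: span_eq_iff[THEN iffD2])
  ultimately show ?thesis
    using image_kernel_orthogonal_complement[OF f V W_def] by simp
qed

lemma subspace_neq_iff_dim_less:
  fixes S T :: "'a::euclidean_space set"
  assumes "subspace S" "subspace T" "S \<subseteq> T"
  shows "S \<noteq> T \<longleftrightarrow> dim S < dim T"
proof
  assume "S \<noteq> T"
  then have "\<not> dim T \<le> dim S"
    using subspace_dim_equal[OF assms] by blast
  then show "dim S < dim T"
    by simp
qed auto

lemma subspace_componentwise:
  "(\<And>e. subspace (H e)) \<Longrightarrow> subspace {D::'a::real_vector^'e::finite. \<forall>e. D$e \<in> H e}"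
  unfolding subspace_def by auto

lemma dim_componentwise:
  fixes H :: "'e::finite \<Rightarrow> 'a::euclidean_space set"
  assumes H: "\<And>e. subspace (H e)"
  shows "dim {D::'a^'e. \<forall>e. D$e \<in> H e} = (\<Sum>e\<in>UNIV. dim (H e))"
proof -
  define G where "G F = {D::'a^'e. \<forall>e. D$e \<in> (if e \<in> F then H e else {0})}" for F
  have G: "subspace (G F)" for F
    unfolding G_def by (rule subspace_componentwise) (auto simp: H subspace_0)
  have "dim (G F) = (\<Sum>e\<in>F. dim (H e))" if "finite F" for F
    using that
  proof (induction F rule: finite_induct)
    case empty
    have "G {} = {0}"
      unfolding G_def by (auto simp: vec_eq_iff)
    then show ?case
      by simp
  next
    case (insert a F)
    have "{D \<in> G (insert a F). D$a = 0} = G F"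
      using insert(2) H unfolding G_def by (auto simp: subspace_0 split: if_splits)
    moreover have "(\<lambda>D. D$a) ` G (insert a F) = H a"
    proof
      show "(\<lambda>D. D$a) ` G (insert a F) \<subseteq> H a"
        unfolding G_def by (auto split: if_splits)
      show "H a \<subseteq> (\<lambda>D. D$a) ` G (insert a F)"
      proof
        fix h assume "h \<in> H a"
        then have "(\<chi> e. if e = a then h else 0) \<in> G (insert a F)"
          using H by (auto simp: G_def subspace_0)
        then show "h \<in> (\<lambda>D. D$a) ` G (insert a F)"
          by (rule rev_image_eqI) simp
      qed
    qed
    moreover have "linear (\<lambda>D::'a^'e. D$a)"
      by (simp add: linear_iff)
    ultimately show ?case
      using dim_kernel_add_dim_image[of "\<lambda>D. D$a", OF _ G[of "insert a F"]] insert by simp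
  qed
  from this[of UNIV] show ?thesis
    by (simp add: G_def)
qed

lemma opc_span_Union_subspaces:
  fixes T :: "'e::finite \<Rightarrow> 'n::finite op set"
  assumes T: "\<And>e. opc.subspace (T e)" and X: "X \<in> opc.span (\<Union>e. T e)"
  shows "\<exists>D::('n op)^'e. (\<forall>e. D$e \<in> T e) \<and> X = (\<Sum>e\<in>UNIV. D$e)"
  using X
proof (induction rule: opc.span_induct_alt)
  case base
  show ?case
    by (rule exI[of _ 0]) (simp add: T opc.subspace_0)
next
  case (step c x y)
  obtain e0 where e0: "x \<in> T e0"
    using step(1) by blast
  obtain D where D: "\<forall>e. D$e \<in> T e" "y = (\<Sum>e\<in>UNIV. D$e)"
    using step(2) by blast
  define D' where "D' = D + (\<chi> e. if e = e0 then cscale c x else 0)"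
  have "\<forall>e. D'$e \<in> T e"
    using D(1) e0 T by (auto simp: D'_def opc.subspace_add opc.subspace_scale)
  moreover have "cscale c x + y = (\<Sum>e\<in>UNIV. D'$e)"
    unfolding D'_def D(2) by (simp add: sum.distrib add.commute)
  ultimately show ?case
    by blast
qed

definition zero_sum_hermitian :: "('e::finite \<Rightarrow> 'n::finite op set) \<Rightarrow> ('n op^'e) set" where
  "zero_sum_hermitian T = {D. (\<forall>e. D$e \<in> hermitian_part (T e)) \<and> (\<Sum>e\<in>UNIV. D$e) = 0}"

lemma linear_sum_components: "linear (\<lambda>D::'a::real_vector^'e::finite. \<Sum>e\<in>UNIV. D$e)"
  unfolding linear_iff by (simp add: sum.distrib scaleR_sum_right)

lemma subspace_zero_sum_hermitian:
  assumes "\<And>e. opc.subspace (T e)"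
  shows "subspace (zero_sum_hermitian T)"
proof -
  have "subspace {D. \<forall>e. D$e \<in> hermitian_part (T e)}"
    by (intro subspace_componentwise subspace_hermitian_part assms)
  then have "subspace {D \<in> {D. \<forall>e. D$e \<in> hermitian_part (T e)}. (\<Sum>e\<in>UNIV. D$e) = 0}"
    unfolding subspace_def by (auto simp: sum.distrib simp flip: scaleR_sum_right)
  then show ?thesis
    unfolding zero_sum_hermitian_def by simp
qed

lemma sum_components_image_hermitian_parts:
  fixes T :: "'e::finite \<Rightarrow> 'n::finite op set"
  assumes T: "\<And>e. opc.subspace (T e)" and adj: "\<And>e A. A \<in> T e \<Longrightarrow> cadj A \<in> T e"
  shows "(\<lambda>D. \<Sum>e\<in>UNIV. D$e) ` {D. \<forall>e. D$e \<in> hermitian_part (T e)}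
    = hermitian_part (opc.span (\<Union>e. T e))"
proof (intro set_eqI iffI)
  fix A assume "A \<in> (\<lambda>D. \<Sum>e\<in>UNIV. D$e) ` {D. \<forall>e. D$e \<in> hermitian_part (T e)}"
  then obtain D where D: "\<forall>e. D$e \<in> hermitian_part (T e)" "A = (\<Sum>e\<in>UNIV. D$e)"
    by blast
  have "A \<in> opc.span (\<Union>e. T e)"
    unfolding D(2) using D(1)
    by (intro opc.span_sum) (auto simp: hermitian_part_def intro: opc.span_base)
  moreover have "hermitian_op A"
    unfolding D(2) using D(1) by (intro hermitian_sum) (auto simp: hermitian_part_def)
  ultimately show "A \<in> hermitian_part (opc.span (\<Union>e. T e))"
    by (simp add: hermitian_part_def)
next
  fix A assume A: "A \<in> hermitian_part (opc.span (\<Union>e. T e))"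
  then have "A \<in> opc.span (\<Union>e. T e)"
    by (simp add: hermitian_part_def)
  from opc_span_Union_subspaces[of T, OF T this]
  obtain D :: "('n op)^'e" where D: "\<forall>e. D$e \<in> T e" "A = (\<Sum>e\<in>UNIV. D$e)"
    by blast
  define H where "H = (\<chi> e. (1/2::real) *\<^sub>R (D$e + cadj (D$e)))"
  have "\<forall>e. H$e \<in> hermitian_part (T e)"
    unfolding H_def using D(1) by (auto intro: real_part_in_hermitian_part T adj)
  moreover have "(\<Sum>e\<in>UNIV. H$e) = (1/2::real) *\<^sub>R (A + cadj A)"
    unfolding H_def D(2) cadj_sum scaleR_sum_right sum.distrib[symmetric] by simp
  then have "(\<Sum>e\<in>UNIV. H$e) = A"
    using A by (simp add: hermitian_part_def hermitian_op_def flip: scaleR_2)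
  ultimately show "A \<in> (\<lambda>D. \<Sum>e\<in>UNIV. D$e) ` {D. \<forall>e. D$e \<in> hermitian_part (T e)}"
    by (auto intro!: image_eqI[where x = H])
qed

lemma dim_zero_sum_hermitian:
  fixes T :: "'e::finite \<Rightarrow> 'n::finite op set"
  assumes T: "\<And>e. opc.subspace (T e)" and adj: "\<And>e A. A \<in> T e \<Longrightarrow> cadj A \<in> T e"
  shows "dim (zero_sum_hermitian T) + opc.dim (opc.span (\<Union>e. T e)) = (\<Sum>e\<in>UNIV. opc.dim (T e))"
proof -
  define G where "G = {D::('n op)^'e. \<forall>e. D$e \<in> hermitian_part (T e)}"
  have G: "subspace G"
    unfolding G_def by (intro subspace_componentwise subspace_hermitian_part T)
  have "dim ((\<lambda>D. \<Sum>e\<in>UNIV. D$e) ` G) = dim (hermitian_part (opc.span (\<Union>e. T e)))"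
    unfolding G_def by (simp only: sum_components_image_hermitian_parts[OF T adj])
  also have "\<dots> = opc.dim (opc.span (\<Union>e. T e))"
    using adj by (intro dim_hermitian_part opc.subspace_span) (auto intro: cadj_in_opc_span)
  finally have "dim {D\<in>G. (\<Sum>e\<in>UNIV. D$e) = 0} + opc.dim (opc.span (\<Union>e. T e)) = dim G"
    using dim_kernel_add_dim_image[OF linear_sum_components G] by simp
  moreover have "dim G = (\<Sum>e\<in>UNIV. opc.dim (T e))"
    unfolding G_def
    by (simp add: dim_componentwise subspace_hermitian_part T dim_hermitian_part adj)
  ultimately show ?thesis
    by (simp add: zero_sum_hermitian_def G_def)
qed

lemma dim_zero_sum_hermitian_UNIV:
  "dim (zero_sum_hermitian (\<lambda>_::'e::finite. UNIV :: 'n::finite op set))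
    = CARD('n)\<^sup>2 * (CARD('e) - 1)"
proof -
  have "dim (zero_sum_hermitian (\<lambda>_::'e. UNIV :: 'n op set)) + CARD('n)\<^sup>2 = CARD('e) * CARD('n)\<^sup>2"
    using dim_zero_sum_hermitian[of "\<lambda>_::'e. UNIV :: 'n op set"] by (simp add: opc_dim_UNIV)
  then have "dim (zero_sum_hermitian (\<lambda>_::'e. UNIV :: 'n op set))
    = CARD('e) * CARD('n)\<^sup>2 - CARD('n)\<^sup>2"
    by (metis add_diff_cancel_right')
  also have "\<dots> = CARD('n)\<^sup>2 * (CARD('e) - 1)"
    by (metis diff_mult_distrib2 mult.commute nat_mult_1_right)
  finally show ?thesis .
qed

section \<open>Faces and boundary of the POVM set\<close>

lemma POVMs_psd: "P \<in> POVMs \<Longrightarrow> psd_op (P$e)"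
  and POVMs_sum: "P \<in> POVMs \<Longrightarrow> (\<Sum>e\<in>UNIV. P$e) = mat 1"
  by (simp_all add: POVMs_def)

lemma sum_components_add_scaleR:
  "(\<Sum>e\<in>UNIV. (P + t *\<^sub>R D)$e) = (\<Sum>e\<in>UNIV. P$e) + t *\<^sub>R (\<Sum>e\<in>UNIV. D$e)"
  by (simp add: sum.distrib scaleR_sum_right)

lemma convex_POVMs: "convex POVMs"
proof (rule convexI)
  fix P Q :: "('n::finite op)^'e::finite" and s t :: real
  assume "P \<in> POVMs" "Q \<in> POVMs" "0 \<le> s" "0 \<le> t" "s + t = 1"
  moreover have "psd_op (s *\<^sub>R P$e + t *\<^sub>R Q$e)" for e
    using convexD[OF convex_psd, of "P$e" "Q$e" s t] calculation by (simp add: POVMs_psd)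
  ultimately show "s *\<^sub>R P + t *\<^sub>R Q \<in> POVMs"
    by (simp add: POVMs_def sum.distrib flip: scaleR_sum_right scaleR_add_left)
qed

lemma face_dirs_subset_zero_sum_hermitian:
  assumes P: "P \<in> POVMs"
  shows "face_dirs P \<subseteq> zero_sum_hermitian (\<lambda>_. UNIV)"
proof
  fix D assume "D \<in> face_dirs P"
  then obtain \<epsilon> where herm: "\<forall>e. hermitian_op (D$e)" and "0 < \<epsilon>" "P + \<epsilon> *\<^sub>R D \<in> POVMs"
    unfolding face_dirs_def by blast
  then have "mat 1 = mat 1 + \<epsilon> *\<^sub>R (\<Sum>e\<in>UNIV. D$e)"
    using POVMs_sum[OF P] POVMs_sum[of "P + \<epsilon> *\<^sub>R D"] by (simp only: sum_components_add_scaleR)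
  then have "(\<Sum>e\<in>UNIV. D$e) = 0"
    using \<open>0 < \<epsilon>\<close> by simp
  with herm show "D \<in> zero_sum_hermitian (\<lambda>_. UNIV)"
    by (simp add: zero_sum_hermitian_def hermitian_part_def)
qed

lemma add_scaleR_in_POVMs:
  assumes P: "P \<in> POVMs" and "(\<Sum>e\<in>UNIV. D$e) = 0" and "\<And>e. psd_op (P$e + t *\<^sub>R D$e)"
  shows "P + t *\<^sub>R D \<in> POVMs"
proof -
  have "(\<Sum>e\<in>UNIV. (P + t *\<^sub>R D)$e) = mat 1"
    unfolding sum_components_add_scaleR assms(2) POVMs_sum[OF P] by simp
  with assms(3) show ?thesis
    by (simp add: POVMs_def)
qed

lemma in_face_dirsI:
  assumes P: "P \<in> POVMs" and D: "D \<in> zero_sum_hermitian (\<lambda>_. UNIV)"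
    and pert: "\<And>e. \<exists>\<epsilon>>0. psd_op (P$e + \<epsilon> *\<^sub>R D$e) \<and> psd_op (P$e - \<epsilon> *\<^sub>R D$e)"
  shows "D \<in> face_dirs P"
proof -
  obtain f where f: "\<And>e. 0 < f e \<and> psd_op (P$e + f e *\<^sub>R D$e) \<and> psd_op (P$e + f e *\<^sub>R (- D$e))"
    using pert by (metis scaleR_minus_right diff_conv_add_uminus)
  define \<epsilon> where "\<epsilon> = Min (range f)"
  have \<epsilon>: "0 < \<epsilon>" "\<And>e. \<epsilon> \<le> f e"
    unfolding \<epsilon>_def using f by (auto simp: Min_gr_iff)
  have sum_D: "(\<Sum>e\<in>UNIV. D$e) = 0" and herm: "\<forall>e. hermitian_op (D$e)"
    using D by (simp_all add: zero_sum_hermitian_def hermitian_part_def)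
  have plus: "psd_op (P$e + \<epsilon> *\<^sub>R D$e)" and minus: "psd_op (P$e + \<epsilon> *\<^sub>R (- D$e))" for e
    by (rule psd_add_smaller_scaleR[OF POVMs_psd[OF P] _ less_imp_le[OF \<epsilon>(1)] \<epsilon>(2)],
        use f[of e] in blast)+
  have "P + \<epsilon> *\<^sub>R D \<in> POVMs"
    by (rule add_scaleR_in_POVMs[OF P sum_D plus])
  moreover have "P + (- \<epsilon>) *\<^sub>R D \<in> POVMs"
    by (rule add_scaleR_in_POVMs[OF P sum_D]) (metis minus scaleR_minus_left scaleR_minus_right)
  ultimately show ?thesis
    unfolding face_dirs_def using \<epsilon>(1) herm by auto
qed

lemma face_dirs_eq:
  assumes P: "P \<in> POVMs" and v: "eig_basis P v"
  shows "face_dirs P = zero_sum_hermitian (\<lambda>e. opc.span (outer_products {..<rank (P$e)} (v e)))"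
    (is "_ = zero_sum_hermitian ?T")
proof -
  have su: "support_basis (P$e) (v e)" for e
    using v by (simp add: eig_basis_iff)
  show ?thesis
  proof (intro set_eqI iffI)
    fix D assume D: "D \<in> face_dirs P"
    then obtain \<epsilon> where "0 < \<epsilon>" "P + \<epsilon> *\<^sub>R D \<in> POVMs" "P - \<epsilon> *\<^sub>R D \<in> POVMs"
      unfolding face_dirs_def by blast
    then have "\<exists>\<epsilon>>0. psd_op (P$e + \<epsilon> *\<^sub>R D$e) \<and> psd_op (P$e - \<epsilon> *\<^sub>R D$e)" for e
      using POVMs_psd by fastforce
    moreover have zero_sum: "D \<in> zero_sum_hermitian (\<lambda>_. UNIV)"
      using face_dirs_subset_zero_sum_hermitian[OF P] D by blast
    ultimately have "D$e \<in> ?T e" for e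
      using psd_perturbable_iff_in_span[OF POVMs_psd[OF P] su]
      by (simp add: zero_sum_hermitian_def hermitian_part_def)
    with zero_sum show "D \<in> zero_sum_hermitian ?T"
      by (simp add: zero_sum_hermitian_def hermitian_part_def)
  next
    fix D assume D: "D \<in> zero_sum_hermitian ?T"
    then have "D \<in> zero_sum_hermitian (\<lambda>_. UNIV)"
      by (simp add: zero_sum_hermitian_def hermitian_part_def)
    moreover have "\<exists>\<epsilon>>0. psd_op (P$e + \<epsilon> *\<^sub>R D$e) \<and> psd_op (P$e - \<epsilon> *\<^sub>R D$e)" for e
      using D psd_perturbable_iff_in_span[OF POVMs_psd[OF P] su]
      by (simp add: zero_sum_hermitian_def hermitian_part_def)
    ultimately show "D \<in> face_dirs P"
      by (rule in_face_dirsI[OF P])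
  qed
qed

lemma dim_face_dirs:
  assumes P: "P \<in> POVMs" and v: "eig_basis P v"
  shows "dim (face_dirs P) + l_num P v = r_num P"
proof -
  let ?B = "\<lambda>e. outer_products {..<rank (P$e)} (v e)"
  have on: "orthonormal {..<rank (P$e)} (v e)" for e
    using v by (simp add: eig_basis_iff support_basis_def)
  have "opc.span (\<Union>e. opc.span (?B e)) = opc.span (\<Union>e. ?B e)"
  proof (rule opc.span_eq[THEN iffD2, OF conjI])
    show "(\<Union>e. opc.span (?B e)) \<subseteq> opc.span (\<Union>e. ?B e)"
      by (intro UN_least opc.span_mono) blast
    show "(\<Union>e. ?B e) \<subseteq> opc.span (\<Union>e. opc.span (?B e))"
      by (auto intro: opc.span_base)
  qed
  also have "(\<Union>e. ?B e) = {outer (v e m) (v e n) | e m n. m < rank (P$e) \<and> n < rank (P$e)}"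
    unfolding outer_products_def by blast
  finally have "opc.dim (opc.span (\<Union>e. opc.span (?B e))) = l_num P v"
    by (simp add: l_num_def opc.dim_span)
  moreover have "opc.dim (opc.span (?B e)) = rank (P$e) ^ 2" for e
    using opc_dim_span_outer_products[OF on] by simp
  moreover have "dim (face_dirs P) + opc.dim (opc.span (\<Union>e. opc.span (?B e)))
      = (\<Sum>e\<in>UNIV. opc.dim (opc.span (?B e)))"
    unfolding face_dirs_eq[OF P v]
    by (rule dim_zero_sum_hermitian)
      (auto intro: opc.subspace_span cadj_in_opc_span cadj_outer_products)
  ultimately show ?thesis
    by (simp add: r_num_def)
qed

lemma not_in_conv_boundary_if_full_face:
  assumes P: "P \<in> POVMs" and full: "zero_sum_hermitian (\<lambda>_. UNIV) \<subseteq> face_dirs P"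
  shows "P \<notin> conv_boundary POVMs"
proof
  assume "P \<in> conv_boundary POVMs"
  then obtain Q where Q: "Q \<in> POVMs"
    and bd: "\<forall>\<epsilon>::real. 0 < \<epsilon> \<and> \<epsilon> \<le> 1 \<longrightarrow> P - \<epsilon> *\<^sub>R (Q - P) \<notin> POVMs"
    unfolding conv_boundary_def by blast
  have "Q - P \<in> zero_sum_hermitian (\<lambda>_. UNIV)"
    using P Q by (simp add: zero_sum_hermitian_def hermitian_part_def POVMs_def psd_hermitian
        hermitian_diff sum_subtractf)
  then obtain \<epsilon> where \<epsilon>: "0 < \<epsilon>" "P - \<epsilon> *\<^sub>R (Q - P) \<in> POVMs"
    using full unfolding face_dirs_def by blast
  define \<delta> where "\<delta> = min \<epsilon> 1"
  have "P - \<delta> *\<^sub>R (Q - P) = (1 - \<delta> / \<epsilon>) *\<^sub>R P + (\<delta> / \<epsilon>) *\<^sub>R (P - \<epsilon> *\<^sub>R (Q - P))"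
    using \<epsilon>(1) by (simp add: algebra_simps)
  also have "\<dots> \<in> POVMs"
    using \<epsilon> P by (intro convexD_alt[OF convex_POVMs]) (auto simp: \<delta>_def)
  finally show False
    using bd \<epsilon>(1) by (simp add: \<delta>_def)
qed

lemma uniform_POVM: "(\<chi> e::'e::finite. (1 / real CARD('e)) *\<^sub>R (mat 1 :: 'n::finite op)) \<in> POVMs"
proof -
  have "(\<Sum>e\<in>UNIV. (\<chi> e::'e. (1 / real CARD('e)) *\<^sub>R (mat 1 :: 'n op))$e)
      = real CARD('e) *\<^sub>R ((1 / real CARD('e)) *\<^sub>R mat 1)"
    by (simp only: vec_lambda_beta sum_constant_scaleR)
  also have "\<dots> = mat 1"
    by (simp only: scaleR_scaleR) simp
  finally show ?thesis
    by (simp add: POVMs_def psd_scaled_identity)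
qed

lemma extend_beyond_if_not_in_conv_boundary:
  assumes P: "P \<in> POVMs" and interior: "P \<notin> conv_boundary POVMs" and Q: "Q \<in> POVMs"
  shows "\<exists>\<epsilon>>0. P - \<epsilon> *\<^sub>R (Q - P) \<in> POVMs"
proof -
  have towards_Q: "P + \<epsilon> *\<^sub>R (Q - P) \<in> POVMs" if "0 \<le> \<epsilon>" "\<epsilon> \<le> 1" for \<epsilon>
    using convexD_alt[OF convex_POVMs P Q that] by (simp add: algebra_simps)
  have "\<not> (\<forall>\<epsilon>::real. 0 < \<epsilon> \<and> \<epsilon> \<le> 1 \<longrightarrow>
      P + \<epsilon> *\<^sub>R (Q - P) \<in> POVMs \<and> P - \<epsilon> *\<^sub>R (Q - P) \<notin> POVMs)"
    using interior P Q unfolding conv_boundary_def by blast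
  then show ?thesis
    using towards_Q by fastforce
qed

lemma uniformly_positive_if_not_in_conv_boundary:
  fixes P :: "('n::finite op)^'e::finite"
  assumes P: "P \<in> POVMs" and interior: "P \<notin> conv_boundary POVMs"
  shows "\<exists>c>0. \<forall>e x. c * Re (cinner x x) \<le> Re (cinner x (P$e *v x))"
proof -
  define N where "N = real CARD('e)"
  define Q :: "('n op)^'e" where "Q = (\<chi> e. (1/N) *\<^sub>R mat 1)"
  obtain \<epsilon> where \<epsilon>: "0 < \<epsilon>" "P - \<epsilon> *\<^sub>R (Q - P) \<in> POVMs"
    using extend_beyond_if_not_in_conv_boundary[OF P interior uniform_POVM]
    unfolding Q_def N_def by blast
  define c where "c = \<epsilon> / (N * (1 + \<epsilon>))"
  have "c * Re (cinner x x) \<le> Re (cinner x (P$e *v x))" for e x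
  proof -
    have "(P - \<epsilon> *\<^sub>R (Q - P))$e = (1 + \<epsilon>) *\<^sub>R P$e + (- \<epsilon> / N) *\<^sub>R mat 1"
      by (simp add: Q_def algebra_simps)
    then have "Re (cinner x ((P - \<epsilon> *\<^sub>R (Q - P))$e *v x))
        = (1 + \<epsilon>) * Re (cinner x (P$e *v x)) - \<epsilon> / N * Re (cinner x x)"
      by (simp only: cinner_scaleR_combination_mv) simp
    moreover have "0 \<le> Re (cinner x ((P - \<epsilon> *\<^sub>R (Q - P))$e *v x))"
      using POVMs_psd[OF \<epsilon>(2)] unfolding psd_op_def by blast
    ultimately have "\<epsilon> / N * Re (cinner x x) \<le> (1 + \<epsilon>) * Re (cinner x (P$e *v x))"
      by linarith
    then have "\<epsilon> / N * Re (cinner x x) / (1 + \<epsilon>) \<le> Re (cinner x (P$e *v x))"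
      using \<epsilon>(1) by (subst pos_divide_le_eq) (simp_all add: mult.commute)
    then show ?thesis
      by (simp add: c_def)
  qed
  moreover have "0 < c"
    using \<epsilon>(1) by (simp add: c_def N_def)
  ultimately show ?thesis
    by blast
qed

lemma full_face_if_not_in_conv_boundary:
  fixes P :: "('n::finite op)^'e::finite"
  assumes P: "P \<in> POVMs" and interior: "P \<notin> conv_boundary POVMs"
  shows "zero_sum_hermitian (\<lambda>_. UNIV) \<subseteq> face_dirs P"
proof
  obtain c where c: "0 < c" "\<And>e x. c * Re (cinner x x) \<le> Re (cinner x (P$e *v x))"
    using uniformly_positive_if_not_in_conv_boundary[OF P interior] by blast
  fix D :: "('n op)^'e" assume D: "D \<in> zero_sum_hermitian (\<lambda>_. UNIV)"
  then have herm: "hermitian_op (D$e)" for e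
    by (simp add: zero_sum_hermitian_def hermitian_part_def)
  show "D \<in> face_dirs P"
  proof (rule in_face_dirsI[OF P D])
    fix e
    show "\<exists>\<epsilon>>0. psd_op (P$e + \<epsilon> *\<^sub>R D$e) \<and> psd_op (P$e - \<epsilon> *\<^sub>R D$e)"
      by (rule psd_two_sided_perturbation[where p = "\<lambda>x. x",
            OF psd_hermitian[OF POVMs_psd[OF P]] herm c(1,2) refl])
  qed
qed

lemma conv_boundary_POVMs_iff:
  assumes "P \<in> POVMs"
  shows "P \<in> conv_boundary POVMs \<longleftrightarrow> face_dirs P \<noteq> zero_sum_hermitian (\<lambda>_. UNIV)"
  using not_in_conv_boundary_if_full_face[OF assms] full_face_if_not_in_conv_boundary[OF assms]
    face_dirs_subset_zero_sum_hermitian[OF assms] by blast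

theorem theorem5:
  fixes P :: "(complex^'n^'n)^'e" and v :: "'e \<Rightarrow> nat \<Rightarrow> complex^'n"
  assumes "P \<in> POVMs"
    and "eig_basis P v"
  shows "(P \<in> conv_boundary POVMs \<longleftrightarrow>
           b_num P v < int (CARD('n)^2 * (CARD('e) - 1)))
       \<and> b_num P v = int (dim (face_dirs P))"
proof -
  let ?W = "zero_sum_hermitian (\<lambda>_::'e. UNIV :: (complex^'n^'n) set)"
  have b: "b_num P v = int (dim (face_dirs P))"
    using dim_face_dirs[OF assms] by (simp add: b_num_def)
  have "subspace (face_dirs P)"
    unfolding face_dirs_eq[OF assms] by (intro subspace_zero_sum_hermitian opc.subspace_span)
  moreover have "subspace ?W"
    by (intro subspace_zero_sum_hermitian opc.subspace_UNIV)
  ultimately have "face_dirs P \<noteq> ?W \<longleftrightarrow> dim (face_dirs P) < dim ?W"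
    by (rule subspace_neq_iff_dim_less[OF _ _ face_dirs_subset_zero_sum_hermitian[OF assms(1)]])
  moreover have "CARD('n)^2 * (CARD('e) - 1) = dim ?W"
    by (simp add: dim_zero_sum_hermitian_UNIV)
  ultimately show ?thesis
    using conv_boundary_POVMs_iff[OF assms(1)] b by simp
qed

end
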